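(* Let $S=\{A,B\}$ be a two-element set and let $s,s':I_m\to S$ be mirrored. Then $s=s'$ or $s=\mathrm{rev}\,s'$.
   Context: $\mathscr{T}_m=\{\sigma\in\mathcal{S}_m \mid \exists t:\ \sigma(1)>\cdots>\sigma(t)=1,\ \sigma(t)<\cdots<\sigma(m)\}$, $\mathcal{S}_m$ acting on sequences $s:I_m\to S$ by $\sigma s=s\circ\sigma^{-1}$. $\mathrm{rev}\,s$ is the reversed sequence, $(\mathrm{rev}\,s)(i)=s(m+1-i)$. Two sequences $s,s'$ are mirrored if for every $\sigma\in\mathscr{T}_m$ there is $\sigma'\in\mathscr{T}_m$ with $\sigma s=\sigma's'$, and for every $\tau'\in\mathscr{T}_m$ there is $\tau\in\mathscr{T}_m$ with $\tau's'=\tau s$. *)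

theory Defs
  imports "HOL-Combinatorics.Permutations"
begin

text \<open>Sequences s : I_m -> S with I_m = {1..m} are represented as lists of length m;
  position i (1-based) is the list entry s ! (i - 1).\<close>

definition Tset :: "nat \<Rightarrow> (nat \<Rightarrow> nat) set" where
  "Tset m = {\<sigma>. \<sigma> permutes {1..m} \<and>
     (\<exists>t\<in>{1..m}. \<sigma> t = 1 \<and>
        (\<forall>i j. 1 \<le> i \<and> i < j \<and> j \<le> t \<longrightarrow> \<sigma> i > \<sigma> j) \<and>
        (\<forall>i j. t \<le> i \<and> i < j \<and> j \<le> m \<longrightarrow> \<sigma> i < \<sigma> j))}"

definition act :: "(nat \<Rightarrow> nat) \<Rightarrow> 'a list \<Rightarrow> 'a list" where
  "act \<sigma> s = map (\<lambda>i. s ! (inv \<sigma> i - 1)) [1..<length s + 1]"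

definition mirrored :: "nat \<Rightarrow> 'a list \<Rightarrow> 'a list \<Rightarrow> bool" where
  "mirrored m s s' \<longleftrightarrow>
     (\<forall>\<sigma>\<in>Tset m. \<exists>\<sigma>'\<in>Tset m. act \<sigma> s = act \<sigma>' s') \<and>
     (\<forall>\<tau>'\<in>Tset m. \<exists>\<tau>\<in>Tset m. act \<tau>' s' = act \<tau> s)"

end

theory Submission
  imports Defs
begin

text \<open>
  For \<open>\<sigma> \<in> Tset m\<close>, the sequence \<open>act \<sigma> s\<close> read backwards lists the entries of \<open>s\<close> in an
  order in which they can be removed one at a time from the two ends of \<open>s\<close>, and every such
  removal order (a peeling of \<open>s\<close>) arises in this way. So mirrored sequences have the same
  peelings, and it suffices to show that a word over \<open>{X, Y}\<close> is determined up to reversal by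
  its peelings.

  Write such a word, starting with \<open>X\<close>, as \<open>X\<^sup>a m X\<^sup>b\<close> with \<open>m\<close> beginning and ending with
  \<open>Y\<close>. The numbers of \<open>X\<close>'s that can be peeled before the first \<open>Y\<close> form the interval
  \<open>[min a b, a + b]\<close>, which determines \<open>{a, b}\<close>; the peelings beginning with \<open>a + b\<close> letters
  \<open>X\<close> continue with exactly the peelings of \<open>m\<close>, so by induction \<open>m\<close> is determined up to
  reversal. The remaining case, a second word \<open>X\<^sup>a (rev m) X\<^sup>b\<close> with \<open>a < b\<close>, forces \<open>m\<close> to
  be a palindrome: the peelings starting with \<open>X\<^sup>a Y\<close> take the \<open>X\<close>'s from the short side, so
  they continue with the peelings of \<open>tl m X\<^sup>b\<close>, respectively \<open>tl (rev m) X\<^sup>b\<close>. By induction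
  these two words agree up to reversal, and for \<open>m = Y z Y\<close> the reversed case reads
  \<open>z Y X\<^sup>b = X\<^sup>b Y z\<close>, an equation whose only solutions are palindromes.
\<close>

section \<open>Permutations acting on sequences\<close>

lemma act_length [simp]: "length (act \<sigma> s) = length s"
  by (simp add: act_def del: upt_Suc)

lemma act_nth: "k < length s \<Longrightarrow> act \<sigma> s ! k = s ! (inv \<sigma> (Suc k) - 1)"
  by (simp add: act_def del: upt_Suc)

lemma act_eqI:
  assumes perm: "\<sigma> permutes {1..length s}" and "length v = length s"
    and nth: "\<And>i. i \<in> {1..length s} \<Longrightarrow> v ! (\<sigma> i - 1) = s ! (i - 1)"
  shows "act \<sigma> s = v"
proof (rule nth_equalityI)
  fix k assume k: "k < length (act \<sigma> s)"
  define i where "i = inv \<sigma> (Suc k)"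
  have \<sigma>i: "\<sigma> i = Suc k"
    unfolding i_def by (rule permutes_inverses(1)[OF perm])
  have "i \<in> {1..length s}"
    using k \<sigma>i permutes_in_image[OF perm, of i] by simp
  then show "act \<sigma> s ! k = v ! k"
    using k nth[of i] \<sigma>i by (simp add: act_nth i_def)
qed (use assms in simp)

lemma act_snoc:
  assumes perm: "\<sigma> permutes {1..length xs}"
  shows "act \<sigma> (xs @ [x]) = act \<sigma> xs @ [x]"
proof (rule act_eqI)
  show "\<sigma> permutes {1..length (xs @ [x])}"
    using perm by (rule permutes_subset) auto
  fix i assume i: "i \<in> {1..length (xs @ [x])}"
  show "(act \<sigma> xs @ [x]) ! (\<sigma> i - 1) = (xs @ [x]) ! (i - 1)"
  proof (cases "i = Suc (length xs)")
    case True
    then show ?thesis using permutes_not_in[OF perm, of i] by (simp add: nth_append)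
  next
    case False
    then have i': "i \<in> {1..length xs}" using i by auto
    then have "\<sigma> i \<in> {1..length xs}" using permutes_in_image[OF perm] by simp
    then show ?thesis
      using i' permutes_inverses(2)[OF perm] by (auto simp: nth_append act_nth)
  qed
qed simp

definition perm_cons :: "nat \<Rightarrow> (nat \<Rightarrow> nat) \<Rightarrow> nat \<Rightarrow> nat" where
  "perm_cons m \<tau> i = (if i = 1 then Suc m else if i \<in> {2..Suc m} then \<tau> (i - 1) else i)"

lemma perm_cons_permutes:
  assumes perm: "\<tau> permutes {1..m}"
  shows "perm_cons m \<tau> permutes {1..Suc m}"
proof (rule inj_imp_permutes)
  have shifted: "perm_cons m \<tau> i = \<tau> (i - 1) \<and> \<tau> (i - 1) \<in> {1..m}" if "i \<in> {2..Suc m}" for i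
  proof -
    have "i - 1 \<in> {1..m}" using that by auto
    then show ?thesis using that permutes_in_image[OF perm] by (auto simp: perm_cons_def)
  qed
  have split: "i = 1 \<or> i \<in> {2..Suc m}" if "i \<in> {1..Suc m}" for i
    using that by auto
  show "perm_cons m \<tau> i \<in> {1..Suc m}" if "i \<in> {1..Suc m}" for i
    using split[OF that] shifted[of i] by (auto simp: perm_cons_def)
  show "inj_on (perm_cons m \<tau>) {1..Suc m}"
  proof (rule inj_onI)
    fix i j assume "i \<in> {1..Suc m}" "j \<in> {1..Suc m}" "perm_cons m \<tau> i = perm_cons m \<tau> j"
    moreover have "\<tau> (i - 1) = \<tau> (j - 1) \<Longrightarrow> i - 1 = j - 1"
      using permutes_inj[OF perm] by (rule injD)
    ultimately show "i = j"
      using split shifted[of i] shifted[of j] by (fastforce simp: perm_cons_def)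
  qed
qed (auto simp: perm_cons_def)

lemma act_perm_cons:
  assumes perm: "\<tau> permutes {1..length xs}"
  shows "act (perm_cons (length xs) \<tau>) (x # xs) = act \<tau> xs @ [x]"
proof (rule act_eqI)
  show "perm_cons (length xs) \<tau> permutes {1..length (x # xs)}"
    using perm_cons_permutes[OF perm] by simp
  fix i assume i: "i \<in> {1..length (x # xs)}"
  show "(act \<tau> xs @ [x]) ! (perm_cons (length xs) \<tau> i - 1) = (x # xs) ! (i - 1)"
  proof (cases "i = 1")
    case False
    then have i': "i - 1 \<in> {1..length xs}" using i by auto
    then have "\<tau> (i - 1) \<in> {1..length xs}" using permutes_in_image[OF perm] by simp
    then show ?thesis
      using False i' permutes_inverses(2)[OF perm]
      by (auto simp: perm_cons_def nth_append act_nth nth_Cons')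
  qed (simp add: perm_cons_def nth_append)
qed simp

definition perm_tl :: "nat \<Rightarrow> (nat \<Rightarrow> nat) \<Rightarrow> nat \<Rightarrow> nat" where
  "perm_tl m \<sigma> i = (if i \<in> {1..m} then \<sigma> (Suc i) else i)"

lemma perm_tl_permutes:
  assumes perm: "\<sigma> permutes {1..Suc m}" and top: "\<sigma> 1 = Suc m"
  shows "perm_tl m \<sigma> permutes {1..m}"
proof (rule inj_imp_permutes)
  have inj: "inj \<sigma>" using perm by (rule permutes_inj)
  show "perm_tl m \<sigma> i \<in> {1..m}" if "i \<in> {1..m}" for i
  proof -
    have "\<sigma> (Suc i) \<in> {1..Suc m}" using that permutes_in_image[OF perm] by simp
    moreover have "\<sigma> (Suc i) \<noteq> \<sigma> 1" using that inj by (auto dest: injD)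
    ultimately show ?thesis using that top by (simp add: perm_tl_def)
  qed
  show "inj_on (perm_tl m \<sigma>) {1..m}"
  proof (rule inj_onI)
    fix i j assume "i \<in> {1..m}" "j \<in> {1..m}" "perm_tl m \<sigma> i = perm_tl m \<sigma> j"
    then have "\<sigma> (Suc i) = \<sigma> (Suc j)" by (simp add: perm_tl_def)
    then show "i = j" using inj by (metis injD nat.inject)
  qed
qed (auto simp: perm_tl_def)

lemma perm_cons_perm_tl:
  assumes perm: "\<sigma> permutes {1..Suc m}" and top: "\<sigma> 1 = Suc m"
  shows "perm_cons m (perm_tl m \<sigma>) = \<sigma>"
proof
  fix i
  consider "i = 1" | "i \<in> {2..Suc m}" | "i \<notin> {1..Suc m}" by force
  then show "perm_cons m (perm_tl m \<sigma>) i = \<sigma> i"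
  proof cases
    case 2
    then have "i - 1 \<in> {1..m}" "Suc (i - 1) = i" by auto
    then show ?thesis using 2 by (simp add: perm_cons_def perm_tl_def)
  qed (use top permutes_not_in[OF perm, of i] in \<open>auto simp: perm_cons_def\<close>)
qed

section \<open>V-shaped permutations\<close>

lemma TsetE:
  assumes "\<sigma> \<in> Tset n"
  obtains t where "\<sigma> permutes {1..n}" "t \<in> {1..n}" "\<sigma> t = 1"
    "\<And>i j. 1 \<le> i \<Longrightarrow> i < j \<Longrightarrow> j \<le> t \<Longrightarrow> \<sigma> i > \<sigma> j"
    "\<And>i j. t \<le> i \<Longrightarrow> i < j \<Longrightarrow> j \<le> n \<Longrightarrow> \<sigma> i < \<sigma> j"
  using assms unfolding Tset_def by blast

lemma TsetI:
  assumes "\<sigma> permutes {1..n}" "t \<in> {1..n}" "\<sigma> t = 1"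
    "\<And>i j. 1 \<le> i \<Longrightarrow> i < j \<Longrightarrow> j \<le> t \<Longrightarrow> \<sigma> i > \<sigma> j"
    "\<And>i j. t \<le> i \<Longrightarrow> i < j \<Longrightarrow> j \<le> n \<Longrightarrow> \<sigma> i < \<sigma> j"
  shows "\<sigma> \<in> Tset n"
  using assms unfolding Tset_def by blast

lemma Tset_1: "Tset 1 = {id}"
proof -
  have "id \<in> Tset 1" by (rule TsetI[of _ _ 1]) auto
  moreover have "\<sigma> = id" if "\<sigma> \<in> Tset 1" for \<sigma>
    using that by (elim TsetE) simp
  ultimately show ?thesis by blast
qed

lemma Tset_max_at_ends:
  assumes "\<sigma> \<in> Tset n"
  shows "\<sigma> 1 = n \<or> \<sigma> n = n"
proof -
  obtain t where perm: "\<sigma> permutes {1..n}" and t: "t \<in> {1..n}" "\<sigma> t = 1"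
    and dec: "\<And>i j. 1 \<le> i \<Longrightarrow> i < j \<Longrightarrow> j \<le> t \<Longrightarrow> \<sigma> i > \<sigma> j"
    and inc: "\<And>i j. t \<le> i \<Longrightarrow> i < j \<Longrightarrow> j \<le> n \<Longrightarrow> \<sigma> i < \<sigma> j"
    using assms by (elim TsetE) fast
  have "1 \<in> {1..n}" "n \<in> {1..n}" using t by auto
  then have "\<sigma> 1 \<in> {1..n}" "\<sigma> n \<in> {1..n}" using permutes_in_image[OF perm] by blast+
  obtain k where k: "k \<in> {1..n}" "\<sigma> k = n"
    using \<open>n \<in> {1..n}\<close> permutes_image[OF perm] by (metis imageE)
  have "\<not> (1 < k \<and> k \<le> t)" "\<not> (t \<le> k \<and> k < n)"
    using k \<open>\<sigma> 1 \<in> {1..n}\<close> \<open>\<sigma> n \<in> {1..n}\<close> dec[of 1 k] inc[of k n] by auto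
  then show ?thesis
    using k by (metis atLeastAtMost_iff le_less not_le)
qed

lemma Tset_subset_Suc: "Tset m \<subseteq> Tset (Suc m)"
proof
  fix \<sigma> assume \<sigma>: "\<sigma> \<in> Tset m"
  obtain t where perm: "\<sigma> permutes {1..m}" and t: "t \<in> {1..m}" "\<sigma> t = 1"
    and dec: "\<And>i j. 1 \<le> i \<Longrightarrow> i < j \<Longrightarrow> j \<le> t \<Longrightarrow> \<sigma> i > \<sigma> j"
    and inc: "\<And>i j. t \<le> i \<Longrightarrow> i < j \<Longrightarrow> j \<le> m \<Longrightarrow> \<sigma> i < \<sigma> j"
    using \<sigma> by (elim TsetE) fast
  have below_top: "\<sigma> i < \<sigma> (Suc m)" if "i \<in> {1..m}" for i
  proof -
    have "\<sigma> i \<in> {1..m}" using that permutes_in_image[OF perm] by blast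
    then show ?thesis using permutes_not_in[OF perm, of "Suc m"] by simp
  qed
  show "\<sigma> \<in> Tset (Suc m)"
  proof (rule TsetI[of _ _ t])
    show "\<sigma> permutes {1..Suc m}" using perm by (rule permutes_subset) auto
    fix i j assume "t \<le> i" "i < j" "j \<le> Suc m"
    then show "\<sigma> i < \<sigma> j"
      using t inc[of i j] below_top[of i] by (cases "j = Suc m") auto
  qed (use t dec in auto)
qed

lemma perm_cons_Tset:
  assumes "\<tau> \<in> Tset m"
  shows "perm_cons m \<tau> \<in> Tset (Suc m)"
proof -
  obtain t where perm: "\<tau> permutes {1..m}" and t: "t \<in> {1..m}" "\<tau> t = 1"
    and dec: "\<And>i j. 1 \<le> i \<Longrightarrow> i < j \<Longrightarrow> j \<le> t \<Longrightarrow> \<tau> i > \<tau> j"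
    and inc: "\<And>i j. t \<le> i \<Longrightarrow> i < j \<Longrightarrow> j \<le> m \<Longrightarrow> \<tau> i < \<tau> j"
    using assms by (elim TsetE) fast
  have shifted: "perm_cons m \<tau> i = \<tau> (i - 1)" if "2 \<le> i" "i \<le> Suc m" for i
    using that by (simp add: perm_cons_def)
  show ?thesis
  proof (rule TsetI[OF perm_cons_permutes[OF perm], of "Suc t"])
    fix i j assume ij: "1 \<le> i" "i < j" "j \<le> Suc t"
    show "perm_cons m \<tau> i > perm_cons m \<tau> j"
    proof (cases "i = 1")
      case True
      have "j - 1 \<in> {1..m}"
        using ij t by auto
      then have "\<tau> (j - 1) \<in> {1..m}"
        using permutes_in_image[OF perm] by blast
      then show ?thesis using True ij t shifted[of j] by (simp add: perm_cons_def)
    next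
      case False
      then show ?thesis using ij t shifted[of i] shifted[of j] dec[of "i - 1" "j - 1"] by simp
    qed
  next
    fix i j assume "Suc t \<le> i" "i < j" "j \<le> Suc m"
    then show "perm_cons m \<tau> i < perm_cons m \<tau> j"
      using t shifted[of i] shifted[of j] inc[of "i - 1" "j - 1"] by simp
  next
    show "Suc t \<in> {1..Suc m}" using t by simp
    show "perm_cons m \<tau> (Suc t) = 1" using t shifted[of "Suc t"] by simp
  qed
qed

lemma Tset_Suc_fixing_top:
  assumes "\<sigma> \<in> Tset (Suc m)" "\<sigma> (Suc m) = Suc m" "1 \<le> m"
  shows "\<sigma> \<in> Tset m"
proof -
  obtain t where perm: "\<sigma> permutes {1..Suc m}" and t: "t \<in> {1..Suc m}" "\<sigma> t = 1"
    and dec: "\<And>i j. 1 \<le> i \<Longrightarrow> i < j \<Longrightarrow> j \<le> t \<Longrightarrow> \<sigma> i > \<sigma> j"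
    and inc: "\<And>i j. t \<le> i \<Longrightarrow> i < j \<Longrightarrow> j \<le> Suc m \<Longrightarrow> \<sigma> i < \<sigma> j"
    using assms(1) by (elim TsetE) fast
  have perm': "\<sigma> permutes {1..m}"
  proof (rule inj_imp_permutes)
    show "inj_on \<sigma> {1..m}" using permutes_inj_on[OF perm] by (rule inj_on_subset) auto
    show "\<sigma> i \<in> {1..m}" if "i \<in> {1..m}" for i
    proof -
      have "\<sigma> i \<in> {1..Suc m}" using that permutes_in_image[OF perm] by simp
      moreover have "i \<noteq> Suc m" using that by simp
      then have "\<sigma> i \<noteq> \<sigma> (Suc m)" using permutes_inj[OF perm] by (metis injD)
      ultimately show ?thesis using assms(2) by auto
    qed
    show "\<sigma> i = i" if "i \<notin> {1..m}" for i
      using that assms(2) permutes_not_in[OF perm, of i] by (cases "i = Suc m") auto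
  qed simp
  have "t \<noteq> Suc m" using t assms(2,3) by auto
  then have "t \<in> {1..m}" using t by simp
  then show ?thesis
    using t(2) dec inc by (rule TsetI[OF perm']) simp_all
qed

lemma perm_tl_Tset:
  assumes "\<sigma> \<in> Tset (Suc m)" "\<sigma> 1 = Suc m" "1 \<le> m"
  shows "perm_tl m \<sigma> \<in> Tset m"
proof -
  obtain t where perm: "\<sigma> permutes {1..Suc m}" and t: "t \<in> {1..Suc m}" "\<sigma> t = 1"
    and dec: "\<And>i j. 1 \<le> i \<Longrightarrow> i < j \<Longrightarrow> j \<le> t \<Longrightarrow> \<sigma> i > \<sigma> j"
    and inc: "\<And>i j. t \<le> i \<Longrightarrow> i < j \<Longrightarrow> j \<le> Suc m \<Longrightarrow> \<sigma> i < \<sigma> j"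
    using assms(1) by (elim TsetE) fast
  have "t \<noteq> 1" using t assms(2,3) by auto
  then have t': "t - 1 \<in> {1..m}" "perm_tl m \<sigma> (t - 1) = 1" using t by (auto simp: perm_tl_def)
  show ?thesis
  proof (rule TsetI[OF perm_tl_permutes[OF perm assms(2)] t'])
    fix i j assume "1 \<le> i" "i < j" "j \<le> t - 1"
    then show "perm_tl m \<sigma> i > perm_tl m \<sigma> j" using t' dec[of "Suc i" "Suc j"] by (simp add: perm_tl_def)
  next
    fix i j assume "t - 1 \<le> i" "i < j" "j \<le> m"
    then show "perm_tl m \<sigma> i < perm_tl m \<sigma> j" using t' inc[of "Suc i" "Suc j"] by (simp add: perm_tl_def)
  qed
qed

lemma Tset_Suc:
  assumes "1 \<le> m"
  shows "Tset (Suc m) = perm_cons m ` Tset m \<union> Tset m"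
proof
  show "perm_cons m ` Tset m \<union> Tset m \<subseteq> Tset (Suc m)"
    using perm_cons_Tset Tset_subset_Suc by blast
  show "Tset (Suc m) \<subseteq> perm_cons m ` Tset m \<union> Tset m"
  proof
    fix \<sigma> assume \<sigma>: "\<sigma> \<in> Tset (Suc m)"
    then have "\<sigma> permutes {1..Suc m}" by (elim TsetE) fast
    then have "\<sigma> 1 = Suc m \<Longrightarrow> \<sigma> = perm_cons m (perm_tl m \<sigma>)"
      by (simp add: perm_cons_perm_tl)
    then show "\<sigma> \<in> perm_cons m ` Tset m \<union> Tset m"
      using Tset_max_at_ends[OF \<sigma>] perm_tl_Tset[OF \<sigma> _ assms] Tset_Suc_fixing_top[OF \<sigma> _ assms]
      by auto
  qed
qed

lemma act_id: "act id s = s"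
  by (rule act_eqI) simp_all

lemma ex_act_Tset_Suc_iff:
  assumes "1 \<le> m" "length s = Suc m"
  shows "(\<exists>\<sigma>\<in>Tset (Suc m). act \<sigma> s = v) \<longleftrightarrow>
    (\<exists>\<tau>\<in>Tset m. act \<tau> (tl s) @ [hd s] = v) \<or> (\<exists>\<tau>\<in>Tset m. act \<tau> (butlast s) @ [last s] = v)"
proof -
  have len: "length (tl s) = m" "length (butlast s) = m"
    using assms(2) by simp_all
  have s: "s = hd s # tl s" "s = butlast s @ [last s]"
    using assms(2) by (auto simp flip: length_0_conv)
  have "\<tau> permutes {1..m}" if "\<tau> \<in> Tset m" for \<tau>
    using that by (elim TsetE) fast
  then have "act (perm_cons m \<tau>) s = act \<tau> (tl s) @ [hd s]" "act \<tau> s = act \<tau> (butlast s) @ [last s]"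
    if "\<tau> \<in> Tset m" for \<tau>
    using that len act_perm_cons[of \<tau> "tl s" "hd s"] act_snoc[of \<tau> "butlast s" "last s"] s by metis+
  then show ?thesis
    using Tset_Suc[OF assms(1)] by (auto simp: bex_Un)
qed

section \<open>Peelings\<close>

inductive peeling :: "'a list \<Rightarrow> 'a list \<Rightarrow> bool" where
  peeling_Nil: "peeling [] []"
| peeling_first: "peeling xs w \<Longrightarrow> peeling (x # xs) (x # w)"
| peeling_last: "peeling xs w \<Longrightarrow> peeling (xs @ [x]) (x # w)"

inductive_cases peeling_NilE: "peeling [] w"

inductive_cases peeling_to_NilE: "peeling s []"

inductive_cases peeling_ConsE: "peeling s (x # w)"

lemma peeling_refl: "peeling s s"
  by (induction s) (auto intro: peeling.intros)

lemma peeling_Cons_iff: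
  "peeling s (x # w) \<longleftrightarrow> (\<exists>t. s = x # t \<and> peeling t w) \<or> (\<exists>t. s = t @ [x] \<and> peeling t w)"
  by (auto elim: peeling_ConsE intro: peeling.intros)

lemma peeling_nonempty_iff:
  assumes "s \<noteq> []"
  shows "peeling s w \<longleftrightarrow>
    (\<exists>u. w = hd s # u \<and> peeling (tl s) u) \<or> (\<exists>u. w = last s # u \<and> peeling (butlast s) u)"
proof (cases w)
  case Nil
  then show ?thesis using assms by (auto elim: peeling_to_NilE)
next
  case (Cons x u)
  have "s = hd s # tl s" "s = butlast s @ [last s]" using assms by simp_all
  then show ?thesis unfolding Cons peeling_Cons_iff by (metis append1_eq_conv list.inject)
qed

lemma peeling_mset: "peeling s w \<Longrightarrow> mset w = mset s"
  by (induction rule: peeling.induct) auto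

lemma peeling_rev_imp: "peeling s w \<Longrightarrow> peeling (rev s) w"
  by (induction rule: peeling.induct) (auto intro: peeling.intros)

definition peelings :: "'a list \<Rightarrow> 'a list set" where
  "peelings s = {w. peeling s w}"

lemma peelings_rev [simp]: "peelings (rev s) = peelings s"
  using peeling_rev_imp[of s] peeling_rev_imp[of "rev s"] by (auto simp: peelings_def)

lemma peelings_eq_imp_mset_eq:
  assumes "peelings s = peelings s'"
  shows "mset s' = mset s"
  using peeling_refl[of s'] assms by (auto simp: peelings_def dest: peeling_mset)

lemma peeling_iff_act:
  "s \<noteq> [] \<Longrightarrow> peeling s w \<longleftrightarrow> (\<exists>\<sigma>\<in>Tset (length s). act \<sigma> s = rev w)"
proof (induction "length s" arbitrary: s w)
  case 0
  then show ?case by simp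
next
  case (Suc m)
  show ?case
  proof (cases "m = 0")
    case True
    then obtain x where s: "s = [x]" using Suc.hyps(2) by (cases s) auto
    have "peeling [x] w \<longleftrightarrow> w = [x]"
      using peeling_nonempty_iff[of "[x]"] by (auto elim: peeling_NilE intro: peeling_Nil)
    then show ?thesis
      using s Tset_1 act_id[of "[x]"] by (auto simp: rev_swap)
  next
    case False
    have peel_end: "(\<exists>\<tau>\<in>Tset m. act \<tau> v @ [x] = rev w) \<longleftrightarrow> (\<exists>u. w = x # u \<and> peeling v u)"
      if "length v = m" for v x
    proof -
      have "act \<tau> v @ [x] = rev w \<longleftrightarrow> w = x # rev (act \<tau> v)" for \<tau>
        by (metis rev.simps(2) rev_rev_ident)
      then show ?thesis
        using Suc.hyps(1)[of v] that False by auto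
    qed
    have "length (tl s) = m" "length (butlast s) = m"
      using Suc.hyps(2) by simp_all
    then show ?thesis
      using ex_act_Tset_Suc_iff[of m s "rev w"] False Suc.hyps(2)
        peel_end[of "tl s"] peel_end[of "butlast s"] peeling_nonempty_iff[OF Suc.prems]
      by simp
  qed
qed

lemma mirrored_imp_peelings_eq:
  assumes "mirrored (length s) s s'" "length s' = length s"
  shows "peelings s = peelings s'"
proof (cases "s = []")
  case True
  then show ?thesis using assms(2) by simp
next
  case False
  then have "s' \<noteq> []" using assms(2) by auto
  with False assms show ?thesis
    unfolding peelings_def peeling_iff_act[OF False] peeling_iff_act[OF \<open>s' \<noteq> []\<close>] mirrored_def
    by (metis (no_types, lifting))
qed

section \<open>Two-letter words with equal peelings\<close>

lemma conjugate_unique: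
  assumes "u @ v = w @ u" "u' @ v = w @ u'" "length u' = length u" "w \<noteq> []"
  shows "u' = u"
  using assms(1-3)
proof (induction "length u" arbitrary: u u' rule: less_induct)
  case less
  show ?case
  proof (cases "length u \<le> length w")
    case True
    then have "take (length u) w = u" "take (length u') w = u'"
      using arg_cong[OF less.prems(1), of "take (length u)"]
        arg_cong[OF less.prems(2), of "take (length u')"] less.prems(3) by simp_all
    then show ?thesis using less.prems(3) by simp
  next
    case False
    define u1 u1' where "u1 = drop (length w) u" and "u1' = drop (length w) u'"
    have "take (length w) u = w" "take (length w) u' = w"
      using arg_cong[OF less.prems(1), of "take (length w)"]
        arg_cong[OF less.prems(2), of "take (length w)"] False less.prems(3) by simp_all
    then have u: "u = w @ u1" and u': "u' = w @ u1'"
      unfolding u1_def u1'_def by (metis append_take_drop_id)+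
    have "u1 @ v = w @ u1" "u1' @ v = w @ u1'"
      using less.prems(1,2) unfolding u u' by simp_all
    moreover have "length u1 < length u" "length u1' = length u1"
      using u u' less.prems(3) assms(4) by simp_all
    ultimately have "u1' = u1" using less.hyps by blast
    then show ?thesis using u u' by simp
  qed
qed

lemma palindrome_if_shifted_eq:
  assumes "mid \<noteq> []" "hd mid = Y" "last mid = Y"
    and shifted: "tl mid @ replicate b X = replicate b X @ butlast mid"
  shows "rev mid = mid"
proof (cases "tl mid = []")
  case True
  then show ?thesis using assms(1) by (cases mid) auto
next
  case False
  then obtain z where mid: "mid = Y # z @ [Y]"
    using assms(1-3) by (metis append_butlast_last_id last_tl list.collapse)
  have "z @ (Y # replicate b X) = (replicate b X @ [Y]) @ z"
    using shifted unfolding mid by simp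
  moreover then have "rev z @ (Y # replicate b X) = (replicate b X @ [Y]) @ rev z"
    using arg_cong[of _ _ rev] by (metis append.assoc append_Cons append_Nil rev.simps(2) rev_append rev_replicate)
  ultimately have "rev z = z" by (rule conjugate_unique) simp_all
  then show ?thesis unfolding mid by simp
qed

lemma butlast_replicate: "butlast (replicate n x) = replicate (n - 1) x"
  by (cases n) (auto simp flip: replicate_append_same)

lemma padded_ends:
  fixes a b :: nat and X :: 'a and mid :: "'a list"
  assumes "mid \<noteq> []"
  defines "s \<equiv> replicate a X @ mid @ replicate b X"
  shows "hd s = (if a = 0 then hd mid else X)"
    and "tl s = (if a = 0 then tl mid @ replicate b X else replicate (a - 1) X @ mid @ replicate b X)"
    and "last s = (if b = 0 then last mid else X)"
    and "butlast s = (if b = 0 then replicate a X @ butlast mid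
                      else replicate a X @ mid @ replicate (b - 1) X)"
  using assms by (auto simp: butlast_append last_append butlast_replicate)

lemma peeling_padded_Cons_iff:
  assumes "mid \<noteq> []" "hd mid \<noteq> X" "last mid \<noteq> X"
  shows "peeling (replicate a X @ mid @ replicate b X) (x # w) \<longleftrightarrow>
    (if x = X then
       (0 < a \<and> peeling (replicate (a - 1) X @ mid @ replicate b X) w) \<or>
       (0 < b \<and> peeling (replicate a X @ mid @ replicate (b - 1) X) w)
     else
       (a = 0 \<and> x = hd mid \<and> peeling (tl mid @ replicate b X) w) \<or>
       (b = 0 \<and> x = last mid \<and> peeling (replicate a X @ butlast mid) w))"
  using assms by (subst peeling_nonempty_iff) (auto simp: padded_ends)

lemma peeling_padded_replicate_iff:
  assumes "mid \<noteq> []" "hd mid \<noteq> X" "last mid \<noteq> X"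
  shows "peeling (replicate a X @ mid @ replicate b X) (replicate r X @ w) \<longleftrightarrow>
    (\<exists>i j. i \<le> a \<and> j \<le> b \<and> i + j = r \<and> peeling (replicate (a - i) X @ mid @ replicate (b - j) X) w)"
proof (induction r arbitrary: a b)
  case 0
  then show ?case by simp
next
  case (Suc r)
  let ?peel = "\<lambda>i j. peeling (replicate i X @ mid @ replicate j X) w"
  have "peeling (replicate a X @ mid @ replicate b X) (replicate (Suc r) X @ w) \<longleftrightarrow>
    (0 < a \<and> (\<exists>i j. i \<le> a - 1 \<and> j \<le> b \<and> i + j = r \<and> ?peel (a - 1 - i) (b - j))) \<or>
    (0 < b \<and> (\<exists>i j. i \<le> a \<and> j \<le> b - 1 \<and> i + j = r \<and> ?peel (a - i) (b - 1 - j)))"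
    using assms by (simp add: peeling_padded_Cons_iff Suc.IH)
  also have "\<dots> \<longleftrightarrow> (\<exists>i j. i \<le> a \<and> j \<le> b \<and> i + j = Suc r \<and> ?peel (a - i) (b - j))"
  proof
    assume "\<exists>i j. i \<le> a \<and> j \<le> b \<and> i + j = Suc r \<and> ?peel (a - i) (b - j)"
    then obtain i j where ij: "i \<le> a" "j \<le> b" "i + j = Suc r" "?peel (a - i) (b - j)" by blast
    show "(0 < a \<and> (\<exists>i j. i \<le> a - 1 \<and> j \<le> b \<and> i + j = r \<and> ?peel (a - 1 - i) (b - j))) \<or>
      (0 < b \<and> (\<exists>i j. i \<le> a \<and> j \<le> b - 1 \<and> i + j = r \<and> ?peel (a - i) (b - 1 - j)))"
    proof (cases i)
      case 0
      then show ?thesis using ij by (intro disjI2 conjI exI[of _ 0] exI[of _ "j - 1"]) auto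
    next
      case (Suc i')
      then show ?thesis using ij by (intro disjI1 conjI exI[of _ i'] exI[of _ j]) auto
    qed
  next
    assume "(0 < a \<and> (\<exists>i j. i \<le> a - 1 \<and> j \<le> b \<and> i + j = r \<and> ?peel (a - 1 - i) (b - j))) \<or>
      (0 < b \<and> (\<exists>i j. i \<le> a \<and> j \<le> b - 1 \<and> i + j = r \<and> ?peel (a - i) (b - 1 - j)))"
    then show "\<exists>i j. i \<le> a \<and> j \<le> b \<and> i + j = Suc r \<and> ?peel (a - i) (b - j)"
    proof (elim disjE conjE exE)
      fix i j assume "0 < a" "i \<le> a - 1" "j \<le> b" "i + j = r" "?peel (a - 1 - i) (b - j)"
      then show ?thesis by (intro exI[of _ "Suc i"] exI[of _ j]) auto
    next
      fix i j assume "0 < b" "i \<le> a" "j \<le> b - 1" "i + j = r" "?peel (a - i) (b - 1 - j)"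
      then show ?thesis by (intro exI[of _ i] exI[of _ "Suc j"]) auto
    qed
  qed
  finally show ?case .
qed

lemma peeling_padded_replicate_Cons_iff:
  assumes "mid \<noteq> []" "hd mid = Y" "last mid = Y" "X \<noteq> Y"
  shows "peeling (replicate a X @ mid @ replicate b X) (replicate r X @ Y # w) \<longleftrightarrow>
    (\<exists>i j. i \<le> a \<and> j \<le> b \<and> i + j = r \<and>
      (i = a \<and> peeling (tl mid @ replicate (b - j) X) w \<or>
       j = b \<and> peeling (replicate (a - i) X @ butlast mid) w))"
  using assms by (auto simp: peeling_padded_replicate_iff peeling_padded_Cons_iff)

lemma padded_first_Y_position_iff:
  assumes "mid \<noteq> []" "hd mid = Y" "last mid = Y" "X \<noteq> Y"
  shows "(\<exists>w. peeling (replicate a X @ mid @ replicate b X) (replicate r X @ Y # w)) \<longleftrightarrow>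
    min a b \<le> r \<and> r \<le> a + b"
proof -
  have "(\<exists>w. peeling (replicate a X @ mid @ replicate b X) (replicate r X @ Y # w)) \<longleftrightarrow>
    (\<exists>i j. i \<le> a \<and> j \<le> b \<and> i + j = r \<and> (i = a \<or> j = b))"
    using peeling_refl by (auto simp: peeling_padded_replicate_Cons_iff[OF assms])
  also have "\<dots> \<longleftrightarrow> min a b \<le> r \<and> r \<le> a + b"
  proof
    assume r: "min a b \<le> r \<and> r \<le> a + b"
    show "\<exists>i j. i \<le> a \<and> j \<le> b \<and> i + j = r \<and> (i = a \<or> j = b)"
    proof (cases "a \<le> r")
      case True
      then show ?thesis using r by (intro exI[of _ a] exI[of _ "r - a"]) auto
    next
      case False
      then show ?thesis using r by (intro exI[of _ "r - b"] exI[of _ b]) auto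
    qed
  qed auto
  finally show ?thesis .
qed

lemma peeling_padded_all_X_iff:
  assumes "mid \<noteq> []" "hd mid \<noteq> X" "last mid \<noteq> X"
  shows "peeling (replicate a X @ mid @ replicate b X) (replicate (a + b) X @ w) \<longleftrightarrow> peeling mid w"
  using assms by (auto simp: peeling_padded_replicate_iff)

lemma peeling_padded_short_side_iff:
  assumes "mid \<noteq> []" "hd mid = Y" "last mid = Y" "X \<noteq> Y" "a < b"
  shows "peeling (replicate a X @ mid @ replicate b X) (replicate a X @ Y # w) \<longleftrightarrow>
    peeling (tl mid @ replicate b X) w"
  using assms by (auto simp: peeling_padded_replicate_Cons_iff)

lemma replicate_prefix_decomposition:
  obtains a r where "l = replicate a X @ r" "r = [] \<or> hd r \<noteq> X"
proof
  show "l = replicate (length (takeWhile (\<lambda>c. c = X) l)) X @ dropWhile (\<lambda>c. c = X) l"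
    by (metis (mono_tags) replicate_length_same set_takeWhileD takeWhile_dropWhile_id)
  show "dropWhile (\<lambda>c. c = X) l = [] \<or> hd (dropWhile (\<lambda>c. c = X) l) \<noteq> X"
    using hd_dropWhile by blast
qed

lemma padded_decomposition:
  assumes "X \<noteq> Y" "Y \<in> set l" "set l \<subseteq> {X, Y}"
  obtains a mid b where "l = replicate a X @ mid @ replicate b X"
    "mid \<noteq> []" "hd mid = Y" "last mid = Y"
proof -
  obtain a r where l: "l = replicate a X @ r" and r: "r = [] \<or> hd r \<noteq> X"
    by (rule replicate_prefix_decomposition)
  obtain b q where rq: "rev r = replicate b X @ q" and q: "q = [] \<or> hd q \<noteq> X"
    by (rule replicate_prefix_decomposition)
  have "Y \<in> set r" using assms l by auto
  then have "Y \<in> set q" using assms(1) arg_cong[OF rq, of set] by auto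
  have r_eq: "r = rev q @ replicate b X"
    using arg_cong[OF rq, of rev] by simp
  have "q \<noteq> []" using \<open>Y \<in> set q\<close> by auto
  have "hd (rev q) \<in> set q" "last (rev q) \<in> set q"
    using \<open>q \<noteq> []\<close> by (simp_all add: hd_rev last_rev)
  then have "hd (rev q) \<in> {X, Y}" "last (rev q) \<in> {X, Y}"
    using assms(3) l r_eq by auto
  moreover have "hd (rev q) \<noteq> X"
    using r r_eq \<open>q \<noteq> []\<close> by auto
  ultimately show ?thesis
    using that[of a "rev q" b] l r_eq q \<open>q \<noteq> []\<close> by (auto simp: last_rev)
qed

lemma peelings_padded_eqD:
  assumes eq: "peelings (replicate a X @ mid @ replicate b X) = peelings (replicate a' X @ mid' @ replicate b' X)"
    and mid: "mid \<noteq> []" "hd mid = Y" "last mid = Y"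
    and mid': "mid' \<noteq> []" "hd mid' = Y" "last mid' = Y"
    and "X \<noteq> Y"
  shows "(a' = a \<and> b' = b \<or> a' = b \<and> b' = a) \<and> peelings mid = peelings mid'"
proof
  have interval: "min a b \<le> r \<and> r \<le> a + b \<longleftrightarrow> min a' b' \<le> r \<and> r \<le> a' + b'" for r
    using padded_first_Y_position_iff[OF mid \<open>X \<noteq> Y\<close>, of a b r]
      padded_first_Y_position_iff[OF mid' \<open>X \<noteq> Y\<close>, of a' b' r] eq
    by (simp add: peelings_def set_eq_iff)
  have "min a b \<le> a + b" "min a' b' \<le> a' + b'" by linarith+
  then have "min a b = min a' b'" "a + b = a' + b'"
    using interval[of "min a b"] interval[of "min a' b'"] interval[of "a + b"] interval[of "a' + b'"]
    by (meson order.refl order.antisym)+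
  then show "a' = a \<and> b' = b \<or> a' = b \<and> b' = a"
    by (auto simp: min_def split: if_splits)
  have "peeling mid w \<longleftrightarrow> peeling mid' w" for w
    using peeling_padded_all_X_iff[of mid X a b w] peeling_padded_all_X_iff[of mid' X a' b' w]
      eq \<open>a + b = a' + b'\<close> mid mid' \<open>X \<noteq> Y\<close> by (simp add: peelings_def set_eq_iff)
  then show "peelings mid = peelings mid'"
    by (simp add: peelings_def)
qed

lemma peelings_padded_tl_eq:
  assumes eq: "peelings (replicate a X @ mid @ replicate b X) = peelings (replicate a X @ mid' @ replicate b X)"
    and mid: "mid \<noteq> []" "hd mid = Y" "last mid = Y"
    and mid': "mid' \<noteq> []" "hd mid' = Y" "last mid' = Y"
    and "X \<noteq> Y" "a < b"
  shows "peelings (tl mid @ replicate b X) = peelings (tl mid' @ replicate b X)"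
  using eq peeling_padded_short_side_iff[OF mid \<open>X \<noteq> Y\<close> \<open>a < b\<close>]
    peeling_padded_short_side_iff[OF mid' \<open>X \<noteq> Y\<close> \<open>a < b\<close>]
  by (simp add: peelings_def set_eq_iff)

lemma palindrome_if_peelings_eq_less:
  assumes IH: "\<And>t t'. length t < length (replicate a X @ mid @ replicate b X) \<Longrightarrow>
      set t \<subseteq> {X, Y} \<Longrightarrow> set t' \<subseteq> {X, Y} \<Longrightarrow> peelings t = peelings t' \<Longrightarrow> t = t' \<or> t = rev t'"
    and eq: "peelings (replicate a X @ mid @ replicate b X) = peelings (replicate a X @ rev mid @ replicate b X)"
    and mid: "mid \<noteq> []" "hd mid = Y" "last mid = Y" "set mid \<subseteq> {X, Y}"
    and "X \<noteq> Y" "a < b"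
  shows "rev mid = mid"
proof -
  have "hd (rev mid) = Y" "last (rev mid) = Y" using mid by (simp_all add: hd_rev last_rev)
  then have tl_eq: "peelings (tl mid @ replicate b X) = peelings (tl (rev mid) @ replicate b X)"
    using peelings_padded_tl_eq[OF eq mid(1-3)] mid(1) \<open>X \<noteq> Y\<close> \<open>a < b\<close> by simp
  have "length (tl mid @ replicate b X) < length (replicate a X @ mid @ replicate b X)"
    using mid(1) by (cases mid) auto
  moreover have "set (tl mid @ replicate b X) \<subseteq> {X, Y}" "set (tl (rev mid) @ replicate b X) \<subseteq> {X, Y}"
    using mid(1,4) list.set_sel(2)[of mid] list.set_sel(2)[of "rev mid"] by auto
  ultimately consider "tl mid = tl (rev mid)" | "tl mid @ replicate b X = replicate b X @ butlast mid"
    using IH[OF _ _ _ tl_eq] butlast_rev[of "rev mid"] by auto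
  then show ?thesis
  proof cases
    case 1
    then show ?thesis using mid by (metis \<open>hd (rev mid) = Y\<close> list.collapse rev_is_Nil_conv)
  next
    case 2
    then show ?thesis using mid(1-3) by (rule palindrome_if_shifted_eq[rotated 3])
  qed
qed

lemma palindrome_if_peelings_eq:
  assumes IH: "\<And>t t'. length t < length (replicate a X @ mid @ replicate b X) \<Longrightarrow>
      set t \<subseteq> {X, Y} \<Longrightarrow> set t' \<subseteq> {X, Y} \<Longrightarrow> peelings t = peelings t' \<Longrightarrow> t = t' \<or> t = rev t'"
    and eq: "peelings (replicate a X @ mid @ replicate b X) = peelings (replicate a X @ rev mid @ replicate b X)"
    and mid: "mid \<noteq> []" "hd mid = Y" "last mid = Y" "set mid \<subseteq> {X, Y}"
    and "X \<noteq> Y" "a \<noteq> b"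
  shows "rev mid = mid"
proof (cases "a < b")
  case True
  then show ?thesis using palindrome_if_peelings_eq_less[OF IH eq mid] \<open>X \<noteq> Y\<close> by blast
next
  case False
  then have "b < a" using \<open>a \<noteq> b\<close> by simp
  have "peelings (replicate b X @ rev mid @ replicate a X) =
      peelings (replicate b X @ rev (rev mid) @ replicate a X)"
    using eq peelings_rev[of "replicate a X @ mid @ replicate b X"]
      peelings_rev[of "replicate a X @ rev mid @ replicate b X"] by simp
  moreover have "rev mid \<noteq> []" "hd (rev mid) = Y" "last (rev mid) = Y" "set (rev mid) \<subseteq> {X, Y}"
    using mid by (simp_all add: hd_rev last_rev)
  ultimately have "rev (rev mid) = rev mid"
    using palindrome_if_peelings_eq_less[of b X "rev mid" a Y] IH \<open>X \<noteq> Y\<close> \<open>b < a\<close>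
    by (simp add: add.commute)
  then show ?thesis by simp
qed

lemma peelings_eq_padded_forms:
  assumes eq: "peelings s = peelings s'"
    and sets: "set s \<subseteq> {X, Y}" "set s' \<subseteq> {X, Y}"
    and "X \<noteq> Y" "hd s = X" "Y \<in> set s"
  obtains a mid b t mid' where "s = replicate a X @ mid @ replicate b X" "0 < a"
    "mid \<noteq> []" "hd mid = Y" "last mid = Y"
    "t = s' \<or> t = rev s'" "t = replicate a X @ mid' @ replicate b X" "peelings mid' = peelings mid"
proof -
  have "Y \<in> set s'"
    using peelings_eq_imp_mset_eq[OF eq] \<open>Y \<in> set s\<close> by (metis set_mset_mset)
  obtain a mid b where s: "s = replicate a X @ mid @ replicate b X"
    and mid: "mid \<noteq> []" "hd mid = Y" "last mid = Y"
    using padded_decomposition[OF \<open>X \<noteq> Y\<close> \<open>Y \<in> set s\<close> sets(1)] .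
  obtain a' mid' b' where s': "s' = replicate a' X @ mid' @ replicate b' X"
    and mid': "mid' \<noteq> []" "hd mid' = Y" "last mid' = Y"
    using padded_decomposition[OF \<open>X \<noteq> Y\<close> \<open>Y \<in> set s'\<close> sets(2)] .
  have ab: "a' = a \<and> b' = b \<or> a' = b \<and> b' = a" and mid_eq: "peelings mid' = peelings mid"
    using peelings_padded_eqD[OF eq[unfolded s s'] mid mid' \<open>X \<noteq> Y\<close>] by auto
  have "a \<noteq> 0"
    using padded_ends(1)[OF mid(1), of a X b] s mid \<open>hd s = X\<close> \<open>X \<noteq> Y\<close> by (auto split: if_splits)
  from ab show ?thesis
  proof
    assume "a' = a \<and> b' = b"
    then show ?thesis using that[OF s _ mid, of s' mid'] s' mid_eq \<open>a \<noteq> 0\<close> by simp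
  next
    assume "a' = b \<and> b' = a"
    then show ?thesis using that[OF s _ mid, of "rev s'" "rev mid'"] s' mid_eq \<open>a \<noteq> 0\<close> by simp
  qed
qed

lemma peelings_eq_imp_eq_or_rev_step:
  assumes IH: "\<And>t t'. length t < length s \<Longrightarrow> set t \<subseteq> {X, Y} \<Longrightarrow> set t' \<subseteq> {X, Y} \<Longrightarrow>
      peelings t = peelings t' \<Longrightarrow> t = t' \<or> t = rev t'"
    and eq: "peelings s = peelings s'"
    and sets: "set s \<subseteq> {X, Y}" "set s' \<subseteq> {X, Y}"
    and "X \<noteq> Y" "hd s = X" "Y \<in> set s"
  shows "s = s' \<or> s = rev s'"
proof -
  obtain a mid b t mid' where s: "s = replicate a X @ mid @ replicate b X" "0 < a"
    and mid: "mid \<noteq> []" "hd mid = Y" "last mid = Y"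
    and t: "t = s' \<or> t = rev s'" "t = replicate a X @ mid' @ replicate b X"
    and mid_eq: "peelings mid' = peelings mid"
    using peelings_eq_padded_forms[OF eq sets \<open>X \<noteq> Y\<close> \<open>hd s = X\<close> \<open>Y \<in> set s\<close>] .
  have "set t \<subseteq> {X, Y}"
    using t(1) sets(2) by auto
  then have mid_set: "set mid \<subseteq> {X, Y}" and "set mid' \<subseteq> {X, Y}"
    using sets(1) s t(2) by auto
  moreover have "length mid < length s"
    using s by simp
  ultimately have "mid' = mid \<or> mid' = rev mid"
    using IH mid_eq by (metis rev_rev_ident)
  have "t = s \<or> t = rev s"
  proof (cases "mid' = mid \<or> a = b")
    case True
    then show ?thesis using \<open>mid' = mid \<or> mid' = rev mid\<close> s t by auto
  next
    case False
    then have "peelings (replicate a X @ mid @ replicate b X) = peelings (replicate a X @ rev mid @ replicate b X)"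
      using \<open>mid' = mid \<or> mid' = rev mid\<close> eq s t by auto
    then have "rev mid = mid"
      using palindrome_if_peelings_eq[OF IH[unfolded s(1)] _ mid mid_set \<open>X \<noteq> Y\<close>] False by blast
    then show ?thesis using \<open>mid' = mid \<or> mid' = rev mid\<close> s t by auto
  qed
  then show ?thesis using t(1) by auto
qed

lemma peelings_eq_imp_eq_or_rev:
  assumes "X \<noteq> Y" "set s \<subseteq> {X, Y}" "set s' \<subseteq> {X, Y}" "peelings s = peelings s'"
  shows "s = s' \<or> s = rev s'"
  using assms
proof (induction "length s" arbitrary: s s' X Y rule: less_induct)
  case less
  have "mset s' = mset s" using peelings_eq_imp_mset_eq[OF less.prems(4)] .
  show ?case
  proof (cases "\<exists>c\<in>set s. c \<noteq> hd s")
    case False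
    then have "s = replicate (length s) (hd s)" "s' = replicate (length s) (hd s)"
      using \<open>mset s' = mset s\<close>
      by (metis replicate_length_same set_mset_mset size_mset)+
    then show ?thesis by simp
  next
    case True
    then obtain c where c: "c \<in> set s" "c \<noteq> hd s" by blast
    then have XY: "{hd s, c} = {X, Y}"
      using less.prems(2) by (cases s) auto
    have "set s \<subseteq> {hd s, c}" "set s' \<subseteq> {hd s, c}"
      using less.prems(2,3) XY by simp_all
    moreover have "t = t' \<or> t = rev t'" if "length t < length s" "set t \<subseteq> {hd s, c}"
      "set t' \<subseteq> {hd s, c}" "peelings t = peelings t'" for t t'
      using less.hyps[OF that(1) _ that(2-4)] c(2) by blast
    ultimately show ?thesis
      using peelings_eq_imp_eq_or_rev_step[of s "hd s" c s'] less.prems(4) c by blast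
  qed
qed

theorem mainTheorem17:
  fixes A B :: 'a and s s' :: "'a list" and m :: nat
  assumes "A \<noteq> B"
    and "length s = m" and "length s' = m"
    and "set s \<subseteq> {A, B}" and "set s' \<subseteq> {A, B}"
    and "mirrored m s s'"
  shows "s = s' \<or> s = rev s'"
proof -
  have "peelings s = peelings s'"
    using mirrored_imp_peelings_eq[of s s'] assms(2,3,6) by simp
  then show ?thesis
    by (rule peelings_eq_imp_eq_or_rev[OF assms(1,4,5)])
qed

end
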